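(* Let $M$ be a compact metric space and $\mathcal{A}\subseteq[\mathbb{N}]^\omega$ an almost disjoint family. A closed subspace $\mathcal{X}$ of $C_0(M\times K_\mathcal{A})$ is separable if and only if $s(\mathcal{X})=\bigcup_{f\in\mathcal{X}}\{A\in\mathcal{A}: \exists k\in M,\ f(k,y_A)\neq 0\}$ is countable.
   Context: $[\mathbb{N}]^\omega$ is the set of infinite subsets of $\mathbb{N}$; $\mathcal{A}$ is \emph{almost disjoint} if $A\cap B$ is finite for distinct $A,B\in\mathcal{A}$. $K_\mathcal{A}$ is the space with distinct points $\{x_n:n\in\mathbb{N}\}\cup\{y_A:A\in\mathcal{A}\}$, each $x_n$ isolated, and the sets $\{x_n:n\in A\setminus G\}\cup\{y_A\}$, $G\subseteq\mathbb{N}$ finite, forming a neighbourhood basis at $y_A$; it is locally compact Hausdorff. $C_0(\cdot)$ denotes continuous scalar functions vanishing at infinity with the sup norm. *)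

theory Defs
  imports "HOL-Analysis.Analysis"
begin

definition almost_disjoint :: "nat set set \<Rightarrow> bool" where
  "almost_disjoint \<A> \<longleftrightarrow> (\<forall>A\<in>\<A>. infinite A) \<and>
     (\<forall>A\<in>\<A>. \<forall>B\<in>\<A>. A \<noteq> B \<longrightarrow> finite (A \<inter> B))"

text \<open>The space K_A: the point x_n is Inl n, the point y_A is Inr A.\<close>
definition K_carrier :: "nat set set \<Rightarrow> (nat + nat set) set" where
  "K_carrier \<A> = range Inl \<union> Inr ` \<A>"

text \<open>Open sets: generated by the basis consisting of the singletons {x_n} and the sets
  {x_n : n in A - G} \<union> {y_A} with G finite.\<close>
definition K_top :: "nat set set \<Rightarrow> (nat + nat set) topology" where
  "K_top \<A> = topology (\<lambda>U. U \<subseteq> K_carrier \<A> \<and>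
      (\<forall>A\<in>\<A>. Inr A \<in> U \<longrightarrow> (\<exists>G. finite G \<and> Inl ` (A - G) \<subseteq> U)))"

text \<open>C_0(X): continuous scalar functions vanishing at infinity; functions are taken to be
  0 outside the carrier so that they are determined by their values on the space.\<close>
definition C0 :: "'x topology \<Rightarrow> ('x \<Rightarrow> 'a::real_normed_field) set" where
  "C0 X = {f. continuous_map X euclidean f \<and>
              (\<forall>e>0. compactin X {p \<in> topspace X. e \<le> norm (f p)}) \<and>
              (\<forall>p. p \<notin> topspace X \<longrightarrow> f p = 0)}"

text \<open>Sup-norm distance (the 0 handles the empty space).\<close>
definition sup_dist :: "'x topology \<Rightarrow> ('x \<Rightarrow> 'a::real_normed_field) \<Rightarrow> ('x \<Rightarrow> 'a) \<Rightarrow> real" where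
  "sup_dist X f g = Sup (insert 0 ((\<lambda>p. norm (f p - g p)) ` topspace X))"

definition closed_subspace_C0 :: "'x topology \<Rightarrow> ('x \<Rightarrow> 'a::real_normed_field) set \<Rightarrow> bool" where
  "closed_subspace_C0 X \<X> \<longleftrightarrow> \<X> \<subseteq> C0 X \<and> (\<lambda>_. 0) \<in> \<X> \<and>
     (\<forall>f\<in>\<X>. \<forall>g\<in>\<X>. (\<lambda>p. f p + g p) \<in> \<X>) \<and>
     (\<forall>c. \<forall>f\<in>\<X>. (\<lambda>p. c * f p) \<in> \<X>) \<and>
     (\<forall>fs g. (\<forall>n. fs n \<in> \<X>) \<and> g \<in> C0 X \<and> (\<lambda>n. sup_dist X (fs n) g) \<longlonglongrightarrow> 0
        \<longrightarrow> g \<in> \<X>)"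

definition separable_sup :: "'x topology \<Rightarrow> ('x \<Rightarrow> 'a::real_normed_field) set \<Rightarrow> bool" where
  "separable_sup X \<X> \<longleftrightarrow> (\<exists>D. countable D \<and> D \<subseteq> \<X> \<and>
     (\<forall>f\<in>\<X>. \<forall>e>0. \<exists>d\<in>D. sup_dist X f d < e))"

end

theory Submission
  imports Defs "HOL-Computational_Algebra.Fundamental_Theorem_Algebra"
begin

text \<open>If \<open>D\<close> is a countable dense subset of \<open>\<X>\<close>, every \<open>A \<in> s(\<X>)\<close> is already in
  \<open>s({d})\<close> for some \<open>d \<in> D\<close>, and each \<open>s({d})\<close> is countable: the sets \<open>{|d| \<ge> 1/n}\<close> are
  compact, and a compact subset of \<open>K_A\<close> contains only finitely many points \<open>y_A\<close>.

  Conversely, if \<open>s(\<X>)\<close> is countable, the points of \<open>M \<times> K_A\<close> where some \<open>f \<in> \<X>\<close> does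
  not vanish have a countable family of basic neighbourhoods (\<open>M\<close> is second countable, the
  \<open>x_n\<close> are isolated and only countably many \<open>y_A\<close> matter). By compactness of the
  superlevel sets, every \<open>f \<in> \<X>\<close> is uniformly approximated by finite step functions on
  these sets with values in a countable dense subset of the scalars. The scalar field is
  separable since every real normed field is \<open>\<real>\<close> or \<open>\<complex>\<close>; this is proved with Kaplansky's
  argument for the Gelfand--Mazur theorem, which shows that every scalar satisfies a real
  quadratic equation.\<close>

section \<open>Real normed fields are separable\<close>

definition rpoly :: "real poly \<Rightarrow> 'b::{real_algebra_1,comm_ring_1} \<Rightarrow> 'b" where
  "rpoly p x = poly (map_poly of_real p) x"

lemma map_poly_of_real_mult:
  "map_poly (of_real :: real \<Rightarrow> 'b::{real_algebra_1,comm_ring_1}) (p * q) =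
     map_poly of_real p * map_poly of_real q"
  by (intro poly_eqI) (simp add: coeff_map_poly coeff_mult)

lemma map_poly_of_real_add:
  "map_poly (of_real :: real \<Rightarrow> 'b::{real_algebra_1,comm_ring_1}) (p + q) =
     map_poly of_real p + map_poly of_real q"
  by (intro poly_eqI) (simp add: coeff_map_poly)

lemma map_poly_of_real_prod:
  "map_poly (of_real :: real \<Rightarrow> 'b::{real_algebra_1,comm_ring_1}) (\<Prod>i<(N::nat). p i) =
     (\<Prod>i<N. map_poly of_real (p i))"
  by (induction N) (simp_all add: map_poly_of_real_mult)

lemma map_poly_of_real_inject:
  "map_poly (of_real :: real \<Rightarrow> 'b::{real_algebra_1,comm_ring_1}) p = map_poly of_real q \<Longrightarrow> p = q"
  by (intro poly_eqI) (metis coeff_map_poly of_real_0 of_real_eq_iff)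

lemma rpoly_mult: "rpoly (p * q) x = rpoly p x * rpoly q x"
  by (simp add: rpoly_def map_poly_of_real_mult)

lemma rpoly_add: "rpoly (p + q) x = rpoly p x + rpoly q x"
  by (simp add: rpoly_def map_poly_of_real_add)

lemma rpoly_const: "rpoly [:c:] x = of_real c"
  by (simp add: rpoly_def map_poly_pCons)

lemma rpoly_one: "rpoly 1 x = 1"
  by (simp add: rpoly_def)

lemma rpoly_power: "rpoly (p ^ n) x = rpoly p x ^ n"
  by (induction n) (simp_all add: rpoly_mult rpoly_one)

lemma rpoly_prod: "rpoly (\<Prod>i\<in>A. p i) x = (\<Prod>i\<in>A. rpoly (p i) x)"
  by (induction A rule: infinite_finite_induct) (simp_all add: rpoly_mult rpoly_one)

definition conj_quadratic :: "complex \<Rightarrow> real poly" where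
  "conj_quadratic z = [:(cmod z)^2, -2 * Re z, 1:]"

lemma rpoly_conj_quadratic:
  "rpoly (conj_quadratic z) x = of_real ((cmod z)^2) + x * (of_real (-2 * Re z) + x)"
  by (simp add: rpoly_def conj_quadratic_def map_poly_pCons)

lemma rpoly_conj_quadratic_eq_square:
  "rpoly (conj_quadratic z) x = (x - of_real (Re z)) * (x - of_real (Re z)) + of_real (Im z * Im z)"
  unfolding rpoly_conj_quadratic cmod_power2 by (simp add: algebra_simps power2_eq_square)

lemma map_poly_conj_quadratic:
  "map_poly complex_of_real (conj_quadratic z) = [:-z, 1:] * [:-cnj z, 1:]"
proof -
  have "z * cnj z = of_real ((cmod z)^2)" by (metis complex_norm_square of_real_power)
  moreover have "z + cnj z = of_real (2 * Re z)" by (simp add: complex_add_cnj)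
  ultimately show ?thesis
    by (simp add: conj_quadratic_def map_poly_pCons algebra_simps)
qed

lemma rpoly_conj_quadratic_root: "rpoly (conj_quadratic z) z = 0"
  by (simp add: rpoly_def map_poly_conj_quadratic)

lemma monic_real_poly_square_factors:
  assumes deg: "degree G = N" and monic: "lead_coeff G = 1"
  obtains r where "G * G = (\<Prod>i<N. conj_quadratic (r i))"
    and "\<And>z. rpoly G z = (0::complex) \<Longrightarrow> \<exists>i<N. r i = z"
proof -
  define P where "P = map_poly complex_of_real G"
  have "degree P = N" "lead_coeff P = 1"
    using deg monic by (simp_all add: P_def degree_map_poly coeff_map_poly)
  moreover obtain r where "smult (lead_coeff P) (\<Prod>i<degree P. [:-r i, 1:]) = P"
    using complex_poly_decompose' by blast
  ultimately have P_roots: "P = (\<Prod>i<N. [:-r i, 1:])" by simp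
  have "poly (\<Prod>i<N. [:-cnj (r i), 1:]) z = poly P z" for z
  proof -
    have "poly (\<Prod>i<N. [:-cnj (r i), 1:]) z = cnj (\<Prod>i<N. cnj z - r i)"
      by (simp add: poly_prod cnj_prod)
    also have "\<dots> = cnj (poly P (cnj z))" by (simp add: P_roots poly_prod)
    also have "\<dots> = poly P z" by (subst poly_cnj_real) (auto simp: P_def coeff_map_poly)
    finally show ?thesis .
  qed
  then have P_cnj_roots: "(\<Prod>i<N. [:-cnj (r i), 1:]) = P"
    using poly_eq_poly_eq_iff by blast
  have "map_poly complex_of_real (\<Prod>i<N. conj_quadratic (r i)) =
        (\<Prod>i<N. [:-r i, 1:]) * (\<Prod>i<N. [:-cnj (r i), 1:])"
    by (simp only: map_poly_of_real_prod map_poly_conj_quadratic prod.distrib)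
  also have "\<dots> = map_poly complex_of_real (G * G)"
    using P_roots P_cnj_roots by (simp add: P_def map_poly_of_real_mult)
  finally have "G * G = (\<Prod>i<N. conj_quadratic (r i))" by (rule map_poly_of_real_inject[symmetric])
  moreover have "\<exists>i<N. r i = z" if "rpoly G z = 0" for z
    using that by (auto simp: rpoly_def P_def[symmetric] P_roots poly_prod)
  ultimately show thesis using that by blast
qed

lemma norm_rpoly_square_ge:
  fixes \<xi> :: "'a::real_normed_field"
  assumes "degree G = N" "lead_coeff G = 1" and root: "rpoly G z1 = (0::complex)"
    and min: "\<And>z. m \<le> norm (rpoly (conj_quadratic z) \<xi>)" and "0 \<le> m"
  shows "norm (rpoly (conj_quadratic z1) \<xi>) * m ^ (N - 1) \<le> norm (rpoly G \<xi>) ^ 2"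
proof -
  obtain r where GG: "G * G = (\<Prod>i<N. conj_quadratic (r i))"
    and roots: "\<And>z. rpoly G z = (0::complex) \<Longrightarrow> \<exists>i<N. r i = z"
    using monic_real_poly_square_factors assms(1,2) by blast
  obtain i0 where i0: "i0 < N" "r i0 = z1" using roots root by blast
  let ?q = "\<lambda>i. norm (rpoly (conj_quadratic (r i)) \<xi>)"
  have "m ^ (N - 1) = (\<Prod>i\<in>{..<N}-{i0}. m)" using i0 by simp
  also have "\<dots> \<le> (\<Prod>i\<in>{..<N}-{i0}. ?q i)" by (rule prod_mono) (use min \<open>0 \<le> m\<close> in auto)
  finally have "?q i0 * m ^ (N - 1) \<le> ?q i0 * (\<Prod>i\<in>{..<N}-{i0}. ?q i)"
    by (simp add: mult_left_mono)
  also have "\<dots> = (\<Prod>i<N. ?q i)" using i0 by (simp add: prod.remove)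
  also have "\<dots> = norm (rpoly (G * G) \<xi>)" by (simp add: GG rpoly_prod prod_norm)
  also have "\<dots> = norm (rpoly G \<xi>) ^ 2" by (simp add: rpoly_mult norm_mult power2_eq_square)
  finally show ?thesis using i0 by simp
qed

lemma norm_rpoly_conj_quadratic_ge:
  fixes \<xi> :: "'a::real_normed_field"
  assumes "1 \<le> c" "2 * norm \<xi> + norm (\<xi> * \<xi>) + c \<le> cmod z"
  shows "c \<le> norm (rpoly (conj_quadratic z) \<xi>)"
proof -
  have "1 \<le> cmod z" using assms norm_ge_zero[of \<xi>] norm_ge_zero[of "\<xi> * \<xi>"] by linarith
  moreover have "0 \<le> cmod z - 2 * norm \<xi>" using assms norm_ge_zero[of "\<xi> * \<xi>"] by linarith
  ultimately have "1 * (cmod z - 2 * norm \<xi>) \<le> cmod z * (cmod z - 2 * norm \<xi>)"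
    by (rule mult_right_mono)
  then have "norm (\<xi> * \<xi>) + c \<le> cmod z * (cmod z - 2 * norm \<xi>)"
    using assms(2) by simp
  also have "\<dots> = norm (rpoly (conj_quadratic z) \<xi> + of_real (2 * Re z) * \<xi> - \<xi> * \<xi>) - 2 * cmod z * norm \<xi>"
    by (simp add: rpoly_conj_quadratic algebra_simps norm_power power2_eq_square norm_mult)
  also have "\<dots> \<le> norm (rpoly (conj_quadratic z) \<xi>) + norm (of_real (2 * Re z) * \<xi>) + norm (\<xi> * \<xi>)
                  - 2 * cmod z * norm \<xi>"
    by (smt (verit) norm_triangle_ineq norm_triangle_ineq4)
  also have "norm (of_real (2 * Re z) * \<xi>) \<le> 2 * cmod z * norm \<xi>"
    using abs_Re_le_cmod[of z] by (simp add: norm_mult mult_right_mono)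
  finally show ?thesis by simp
qed

lemma conj_quadratic_add_const:
  assumes "0 < \<epsilon>"
  obtains z1 where "conj_quadratic z1 = conj_quadratic z0 + [:\<epsilon>:]" "cmod z0 < cmod z1"
proof
  define z1 where "z1 = Complex (Re z0) (sqrt ((Im z0)^2 + \<epsilon>))"
  have "(cmod z1)^2 = (cmod z0)^2 + \<epsilon>"
    using assms by (simp add: z1_def cmod_power2)
  then show "conj_quadratic z1 = conj_quadratic z0 + [:\<epsilon>:]"
    by (simp add: conj_quadratic_def z1_def)
  have "(cmod z0)^2 < (cmod z1)^2" using \<open>(cmod z1)^2 = (cmod z0)^2 + \<epsilon>\<close> assms by simp
  then show "cmod z0 < cmod z1" by (rule power2_less_imp_less) simp
qed

lemma continuous_coercive_attains_min_max_norm: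
  fixes f :: "'b::{real_normed_vector,heine_borel} \<Rightarrow> real"
  assumes cont: "continuous_on UNIV f" and coercive: "\<And>z. R \<le> norm z \<Longrightarrow> f 0 < f z"
  obtains z0 where "\<And>z. f z0 \<le> f z" "\<And>z. f z = f z0 \<Longrightarrow> norm z \<le> norm z0"
proof -
  have compact_sub: "compact {z. P (f z)}" if "closed {z. P (f z)}" "\<And>z. P (f z) \<Longrightarrow> f z \<le> f 0"
    for P
  proof -
    have "{z. P (f z)} \<subseteq> cball 0 R"
      using that(2) coercive by (force simp: not_le intro: order_less_imp_le)
    then show ?thesis using that(1) by (metis bounded_cball bounded_subset compact_eq_bounded_closed)
  qed
  have "compact {z. f z \<le> f 0}"
    by (rule compact_sub) (simp_all add: closed_Collect_le cont)
  then obtain z1 where z1: "f z1 \<le> f 0" "\<And>z. f z \<le> f 0 \<Longrightarrow> f z1 \<le> f z"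
    using continuous_attains_inf[of "{z. f z \<le> f 0}" f] continuous_on_subset[OF cont] by blast
  have min: "f z1 \<le> f z" for z
    using z1 by (metis le_cases order_trans)
  have "compact {z. f z = f z1}"
    by (rule compact_sub) (use z1(1) in \<open>simp_all add: closed_Collect_eq cont\<close>)
  then obtain z0 where "f z0 = f z1" "\<And>z. f z = f z1 \<Longrightarrow> norm z \<le> norm z0"
    using continuous_attains_sup[of "{z. f z = f z1}" norm] continuous_on_norm_id by blast
  then show thesis using that min by metis
qed

text \<open>Kaplansky's step: \<open>z1\<close> is a root of \<open>G = conj_quadratic z0 ^ n - (-\<epsilon>) ^ n\<close>, whose value
  at \<open>\<xi>\<close> has norm at most \<open>m ^ n + \<epsilon> ^ n\<close>, while \<open>G * G\<close> splits into \<open>2 n\<close> factors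
  \<open>conj_quadratic r\<close>, one of them with \<open>r = z1\<close> and all of norm at least \<open>m\<close> at \<open>\<xi>\<close>.\<close>
lemma norm_rpoly_conj_quadratic_shift_le:
  fixes \<xi> :: "'a::real_normed_field"
  assumes min: "\<And>z. m \<le> norm (rpoly (conj_quadratic z) \<xi>)"
    and z0: "norm (rpoly (conj_quadratic z0) \<xi>) = m"
    and z1: "conj_quadratic z1 = conj_quadratic z0 + [:\<epsilon>:]"
    and "0 < \<epsilon>" "1 \<le> n"
  shows "norm (rpoly (conj_quadratic z1) \<xi>) * m ^ (2 * n - 1) \<le> (m ^ n + \<epsilon> ^ n)^2"
proof -
  define G where "G = conj_quadratic z0 ^ n + [:- ((-\<epsilon>) ^ n):]"
  have q: "degree (conj_quadratic z0) = 2" "lead_coeff (conj_quadratic z0) = 1"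
    by (simp_all add: conj_quadratic_def)
  moreover have "conj_quadratic z0 \<noteq> 0" by (simp add: conj_quadratic_def)
  ultimately have deg_pow: "degree (conj_quadratic z0 ^ n) = 2 * n"
    by (simp add: degree_power_eq)
  have monic_pow: "lead_coeff (conj_quadratic z0 ^ n) = 1"
    by (simp only: lead_coeff_power q(2) power_one)
  from deg_pow have deg: "degree G = 2 * n"
    unfolding G_def using \<open>1 \<le> n\<close> by (subst degree_add_eq_left) auto
  then have monic: "lead_coeff G = 1"
    using \<open>1 \<le> n\<close> deg_pow monic_pow by (simp add: G_def coeff_pCons split: nat.split)
  have "rpoly (conj_quadratic z0) z1 = (- of_real \<epsilon> :: complex)"
    using rpoly_conj_quadratic_root[of z1] unfolding z1 rpoly_add rpoly_const
    by (simp add: add_eq_0_iff)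
  then have root: "rpoly G z1 = (0::complex)"
    unfolding G_def rpoly_add rpoly_power rpoly_const by simp
  have "norm (rpoly G \<xi>) \<le> norm (rpoly (conj_quadratic z0) \<xi> ^ n) + norm (of_real (- ((-\<epsilon>) ^ n)) :: 'a)"
    unfolding G_def rpoly_add rpoly_power rpoly_const by (rule norm_triangle_ineq)
  also have "\<dots> = m ^ n + \<epsilon> ^ n"
    using z0 \<open>0 < \<epsilon>\<close> by (simp add: norm_power power_abs)
  finally have "norm (rpoly G \<xi>) ^ 2 \<le> (m ^ n + \<epsilon> ^ n) ^ 2"
    by (simp add: power_mono)
  moreover have "0 \<le> m" using z0 by auto
  ultimately show ?thesis
    using norm_rpoly_square_ge[OF deg monic root min] by simp
qed

text \<open>Among the minimisers of \<open>z \<mapsto> norm (rpoly (conj_quadratic z) \<xi>)\<close> take one, \<open>z0\<close>, of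
  largest modulus. Raising \<open>conj_quadratic z0\<close> by a constant moves its roots further out, so the
  value \<open>f z1\<close> at the new root exceeds the minimum \<open>m\<close>; Kaplansky's bound forces \<open>f z1 \<le> m\<close>
  unless \<open>m = 0\<close>.\<close>
lemma rpoly_conj_quadratic_vanishes:
  fixes \<xi> :: "'a::real_normed_field"
  obtains z where "rpoly (conj_quadratic z) \<xi> = 0"
proof -
  define f where "f z = norm (rpoly (conj_quadratic z) \<xi>)" for z
  have "continuous_on UNIV f"
    unfolding f_def rpoly_conj_quadratic by (intro continuous_intros)
  moreover have "f 0 < f z" if "2 * norm \<xi> + norm (\<xi> * \<xi>) + (f 0 + 1) \<le> cmod z" for z
    using norm_rpoly_conj_quadratic_ge[OF _ that] by (simp add: f_def)
  ultimately obtain z0 where min: "\<And>z. f z0 \<le> f z"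
    and max_norm: "\<And>z. f z = f z0 \<Longrightarrow> cmod z \<le> cmod z0"
    using continuous_coercive_attains_min_max_norm by blast
  define m where "m = f z0"
  have m_min: "\<And>z. m \<le> norm (rpoly (conj_quadratic z) \<xi>)"
    and m_attained: "norm (rpoly (conj_quadratic z0) \<xi>) = m"
    using min by (simp_all add: m_def f_def)
  have "m = 0"
  proof (rule ccontr)
    assume "m \<noteq> 0"
    then have "0 < m" by (simp add: m_def f_def)
    then obtain z1 where z1: "conj_quadratic z1 = conj_quadratic z0 + [:m / 2:]" "cmod z0 < cmod z1"
      using conj_quadratic_add_const half_gt_zero by blast
    have "m < f z1" using min[of z1] max_norm[of z1] z1(2) by (force simp: m_def)
    moreover have bound: "f z1 \<le> m * (1 + (1/2) ^ n)^2" if "1 \<le> n" for n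
    proof -
      have "f z1 * m ^ (2 * n - 1) \<le> (m ^ n + (m / 2) ^ n)^2"
        using norm_rpoly_conj_quadratic_shift_le[OF m_min m_attained z1(1) _ that] \<open>0 < m\<close>
        by (simp add: f_def)
      also have "\<dots> = (m ^ n * m ^ n) * (1 + (1/2) ^ n)^2"
        by (simp add: power_divide power2_eq_square algebra_simps)
      also have "m ^ n * m ^ n = m * m ^ (2 * n - 1)"
        using that by (simp add: mult_2 flip: power_add power_Suc)
      finally show ?thesis using \<open>0 < m\<close> by (simp add: mult.commute)
    qed
    have "(\<lambda>n. m * (1 + (1/2::real) ^ n)^2) \<longlonglongrightarrow> m * (1 + 0)^2"
      by (intro tendsto_intros LIMSEQ_power_zero) simp
    then have "f z1 \<le> m * (1 + 0)^2"
      by (rule LIMSEQ_le_const) (use bound in blast)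
    ultimately show False by simp
  qed
  then show thesis using that by (simp add: m_def f_def)
qed

lemma real_normed_field_cases:
  fixes y :: "'a::real_normed_field"
  obtains a where "y = of_real a"
  | a b k where "y = of_real a + of_real b * k" "k * k = -1"
proof -
  obtain z where "rpoly (conj_quadratic z) y = 0" using rpoly_conj_quadratic_vanishes by blast
  then have sq: "(y - of_real (Re z)) * (y - of_real (Re z)) = - of_real (Im z * Im z)"
    by (simp add: rpoly_conj_quadratic_eq_square add_eq_0_iff)
  show thesis
  proof (cases "Im z = 0")
    case True
    then show thesis using sq that(1) by simp
  next
    case False
    define k where "k = (y - of_real (Re z)) / of_real (Im z)"
    have "k * k = -1"
      using sq False by (simp add: k_def times_divide_times_eq flip: of_real_mult)
    moreover have "y = of_real (Re z) + of_real (Im z) * k" using False by (simp add: k_def)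
    ultimately show thesis using that(2) by blast
  qed
qed

lemma square_eq_minus_one_cases:
  fixes j k :: "'a::idom"
  assumes "j * j = -1" "k * k = -1"
  shows "k = j \<or> k = - j"
proof -
  have "(k - j) * (k + j) = 0" using assms by (simp add: algebra_simps)
  then show ?thesis by (auto simp: eq_neg_iff_add_eq_0)
qed

lemma real_normed_field_spanned_by_one_elem:
  obtains j :: "'a::real_normed_field" where "\<And>y. \<exists>r s. y = of_real r + of_real s * j"
proof (cases "\<exists>j::'a. j * j = -1")
  case True
  then obtain j :: 'a where j: "j * j = -1" by blast
  have "\<exists>r s. y = of_real r + of_real s * j" for y
  proof (cases y rule: real_normed_field_cases)
    case (1 a)
    then show ?thesis by (metis add.right_neutral mult_zero_left of_real_0)
  next
    case (2 a b k)
    then consider "k = j" | "k = - j" using square_eq_minus_one_cases j by blast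
    then show ?thesis
      by cases (use 2 in \<open>metis, metis minus_mult_commute of_real_minus\<close>)
  qed
  then show thesis using that by blast
next
  case False
  then have "\<exists>r s. y = of_real r + of_real s * 0" for y :: 'a
    by (cases y rule: real_normed_field_cases) auto
  then show thesis using that by blast
qed

lemma real_normed_field_separable:
  obtains Q :: "'a::real_normed_field set"
  where "countable Q" "\<And>y e. 0 < e \<Longrightarrow> \<exists>q\<in>Q. dist y q < e"
proof -
  obtain j :: 'a where j: "\<And>y. \<exists>r s. y = of_real r + of_real s * j"
    using real_normed_field_spanned_by_one_elem by blast
  define Q where "Q = (\<lambda>(r, s). of_real r + of_real s * j) ` (\<rat> \<times> \<rat>)"
  have "countable Q" unfolding Q_def by (intro countable_image countable_SIGMA countable_rat)
  moreover have "\<exists>q\<in>Q. dist y q < e" if "0 < e" for y e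
  proof -
    obtain r s where y: "y = of_real r + of_real s * j" using j by blast
    have "0 < norm j + 1" using norm_ge_zero[of j] by linarith
    define d where "d = e / (2 * (norm j + 1))"
    have "0 < d" using \<open>0 < e\<close> \<open>0 < norm j + 1\<close> by (simp add: d_def)
    obtain r' where r': "r' \<in> \<rat>" "\<bar>r - r'\<bar> < e / 2"
      using Rats_dense_in_real[of "r - e/2" r] \<open>0 < e\<close> by (auto simp: abs_if)
    obtain s' where s': "s' \<in> \<rat>" "\<bar>s - s'\<bar> < d"
      using Rats_dense_in_real[of "s - d" s] \<open>0 < d\<close> by (auto simp: abs_if)
    have "norm (y - (of_real r' + of_real s' * j)) = norm (of_real (r - r') + of_real (s - s') * j)"
      by (simp add: y algebra_simps)
    also have "\<dots> \<le> \<bar>r - r'\<bar> + \<bar>s - s'\<bar> * norm j"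
      by (metis norm_mult norm_of_real norm_triangle_ineq)
    also have "\<bar>s - s'\<bar> * norm j \<le> d * (norm j + 1)"
      using s' by (intro mult_mono) auto
    also have "d * (norm j + 1) = e / 2" using \<open>0 < norm j + 1\<close> by (simp add: d_def field_simps)
    finally have "norm (y - (of_real r' + of_real s' * j)) < e" using r' by simp
    moreover have "of_real r' + of_real s' * j \<in> Q" using r' s' unfolding Q_def by auto
    ultimately show ?thesis by (auto simp: dist_norm)
  qed
  ultimately show thesis using that by blast
qed

section \<open>The space \<open>K_A\<close>\<close>

lemma istopology_K_top: "istopology (\<lambda>U. U \<subseteq> K_carrier \<A> \<and>
      (\<forall>A\<in>\<A>. Inr A \<in> U \<longrightarrow> (\<exists>G. finite G \<and> Inl ` (A - G) \<subseteq> U)))"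
  unfolding istopology_def
proof (rule conjI; intro allI impI)
  fix S T :: "(nat + nat set) set"
  assume S: "S \<subseteq> K_carrier \<A> \<and> (\<forall>A\<in>\<A>. Inr A \<in> S \<longrightarrow> (\<exists>G. finite G \<and> Inl ` (A - G) \<subseteq> S))"
    and T: "T \<subseteq> K_carrier \<A> \<and> (\<forall>A\<in>\<A>. Inr A \<in> T \<longrightarrow> (\<exists>G. finite G \<and> Inl ` (A - G) \<subseteq> T))"
  show "S \<inter> T \<subseteq> K_carrier \<A> \<and> (\<forall>A\<in>\<A>. Inr A \<in> S \<inter> T \<longrightarrow> (\<exists>G. finite G \<and> Inl ` (A - G) \<subseteq> S \<inter> T))"
  proof (intro conjI ballI impI)
    show "S \<inter> T \<subseteq> K_carrier \<A>" using S by blast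
    fix A assume A: "A \<in> \<A>" "Inr A \<in> S \<inter> T"
    obtain G1 where "finite G1" "Inl ` (A - G1) \<subseteq> S" using S A by blast
    moreover obtain G2 where "finite G2" "Inl ` (A - G2) \<subseteq> T" using T A by blast
    ultimately show "\<exists>G. finite G \<and> Inl ` (A - G) \<subseteq> S \<inter> T"
      by (intro exI[of _ "G1 \<union> G2"]) auto
  qed
next
  fix K :: "(nat + nat set) set set"
  assume K: "\<forall>S\<in>K. S \<subseteq> K_carrier \<A> \<and> (\<forall>A\<in>\<A>. Inr A \<in> S \<longrightarrow> (\<exists>G. finite G \<and> Inl ` (A - G) \<subseteq> S))"
  show "\<Union> K \<subseteq> K_carrier \<A> \<and> (\<forall>A\<in>\<A>. Inr A \<in> \<Union> K \<longrightarrow> (\<exists>G. finite G \<and> Inl ` (A - G) \<subseteq> \<Union> K))"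
  proof (intro conjI ballI impI)
    show "\<Union> K \<subseteq> K_carrier \<A>" using K by blast
    fix A assume A: "A \<in> \<A>" "Inr A \<in> \<Union> K"
    then obtain S where "S \<in> K" "Inr A \<in> S" by blast
    have hS: "\<forall>A\<in>\<A>. Inr A \<in> S \<longrightarrow> (\<exists>G. finite G \<and> Inl ` (A - G) \<subseteq> S)"
      using K \<open>S \<in> K\<close> by blast
    obtain G where "finite G" "Inl ` (A - G) \<subseteq> S" using hS A(1) \<open>Inr A \<in> S\<close> by blast
    then show "\<exists>G. finite G \<and> Inl ` (A - G) \<subseteq> \<Union> K" using \<open>S \<in> K\<close> by blast
  qed
qed

lemma openin_K_top:
  "openin (K_top \<A>) U \<longleftrightarrow> U \<subseteq> K_carrier \<A> \<and>
      (\<forall>A\<in>\<A>. Inr A \<in> U \<longrightarrow> (\<exists>G. finite G \<and> Inl ` (A - G) \<subseteq> U))"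
  unfolding K_top_def using istopology_K_top[of \<A>] by (simp add: topology_inverse')

lemma openin_K_top_column:
  "A \<in> \<A> \<Longrightarrow> finite G \<Longrightarrow> openin (K_top \<A>) (insert (Inr A) (Inl ` (A - G)))"
  unfolding openin_K_top K_carrier_def by auto

lemma openin_K_top_Inl: "openin (K_top \<A>) {Inl n}"
  unfolding openin_K_top K_carrier_def by auto

lemma topspace_K_top: "topspace (K_top \<A>) = K_carrier \<A>"
proof -
  have "openin (K_top \<A>) (K_carrier \<A>)"
    unfolding openin_K_top K_carrier_def by (auto intro!: exI[of _ "{}"])
  then have "K_carrier \<A> \<subseteq> topspace (K_top \<A>)" by (rule openin_subset)
  moreover have "topspace (K_top \<A>) \<subseteq> K_carrier \<A>"
    using openin_K_top[of \<A> "topspace (K_top \<A>)"] by simp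
  ultimately show ?thesis by blast
qed

text \<open>The columns \<open>{y_A} \<union> {x_n : n \<in> A}\<close> and the points \<open>x_n\<close> form an open cover in which
  each \<open>y_A\<close> lies in exactly one member.\<close>
lemma compactin_K_top_finite_Inr:
  assumes "compactin (K_top \<A>) C"
  shows "finite {A \<in> \<A>. Inr A \<in> C}"
proof -
  define column where "column A = insert (Inr A) (Inl ` A)" for A :: "nat set"
  define \<U> where "\<U> = column ` \<A> \<union> range (\<lambda>n. {Inl n :: nat + nat set})"
  have "\<forall>U\<in>\<U>. openin (K_top \<A>) U"
    unfolding \<U>_def column_def using openin_K_top_column[of _ \<A> "{}"] openin_K_top_Inl by auto
  moreover have "C \<subseteq> \<Union>\<U>"
    using compactin_subset_topspace[OF assms]
    by (auto simp: topspace_K_top K_carrier_def \<U>_def column_def)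
  ultimately obtain \<F> where \<F>: "finite \<F>" "\<F> \<subseteq> \<U>" "C \<subseteq> \<Union>\<F>"
    using assms unfolding compactin_def by meson
  have "{A \<in> \<A>. Inr A \<in> C} \<subseteq> column -` \<F>"
  proof
    fix A assume "A \<in> {A \<in> \<A>. Inr A \<in> C}"
    then obtain W where "W \<in> \<F>" "Inr A \<in> W" using \<F>(3) by blast
    moreover from this obtain B where "W = column B" using \<F>(2) by (auto simp: \<U>_def)
    ultimately show "A \<in> column -` \<F>" by (auto simp: column_def)
  qed
  moreover have "inj column" by (auto simp: inj_def column_def)
  then have "finite (column -` \<F>)" using \<F>(1) by (simp add: finite_vimageI)
  ultimately show ?thesis by (rule finite_subset)
qed

section \<open>Countable local bases\<close>

definition local_base_on :: "'a topology \<Rightarrow> 'a set \<Rightarrow> 'a set set \<Rightarrow> bool" where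
  "local_base_on X P \<B> \<longleftrightarrow> (\<forall>B\<in>\<B>. openin X B) \<and>
     (\<forall>p\<in>P. \<forall>W. openin X W \<and> p \<in> W \<longrightarrow> (\<exists>B\<in>\<B>. p \<in> B \<and> B \<subseteq> W))"

lemma local_base_on_subset: "local_base_on X P \<B> \<Longrightarrow> P' \<subseteq> P \<Longrightarrow> local_base_on X P' \<B>"
  unfolding local_base_on_def by (meson subsetD)

lemma second_countable_top_of_set_compact:
  fixes M :: "'m::metric_space set"
  assumes "compact M"
  shows "second_countable (top_of_set M)"
proof -
  have "\<exists>N. finite N \<and> M \<subseteq> (\<Union>x\<in>N. ball x (1 / real (Suc m)))" for m
    using assms unfolding compact_eq_totally_bounded by simp
  then obtain N where N: "\<And>m. finite (N m)" "\<And>m. M \<subseteq> (\<Union>x\<in>N m. ball x (1 / real (Suc m)))"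
    by metis
  define \<B> where "\<B> = (\<Union>m. (\<lambda>x. M \<inter> ball x (1 / real (Suc m))) ` N m)"
  show ?thesis
    unfolding second_countable_def
  proof (intro exI[of _ \<B>] conjI ballI allI impI)
    show "countable \<B>"
      unfolding \<B>_def using N(1) by (intro countable_UN) (auto intro: countable_finite)
    show "openin (top_of_set M) B" if "B \<in> \<B>" for B
      using that by (auto simp: \<B>_def intro: openin_open_Int)
    fix U k assume U: "openin (top_of_set M) U \<and> k \<in> U"
    obtain r where "0 < r" "ball k r \<inter> M \<subseteq> U"
      using U unfolding openin_contains_ball by blast
    obtain m where m: "1 / real (Suc m) < r / 2"
      using reals_Archimedean[of "r/2"] \<open>0 < r\<close> by (metis half_gt_zero inverse_eq_divide)
    have "k \<in> M" using U unfolding openin_contains_ball by blast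
    then obtain x where x: "x \<in> N m" "k \<in> ball x (1 / real (Suc m))"
      using N(2)[of m] by blast
    define B where "B = M \<inter> ball x (1 / real (Suc m))"
    have "B \<subseteq> ball k r"
    proof
      fix y assume "y \<in> B"
      then have "dist x y < 1 / real (Suc m)" by (simp add: B_def)
      moreover have "dist x k < 1 / real (Suc m)" using x(2) by simp
      ultimately have "dist k y < r"
        using m dist_triangle[of k y x] by (simp add: dist_commute)
      then show "y \<in> ball k r" by simp
    qed
    then have "B \<subseteq> U" using \<open>ball k r \<inter> M \<subseteq> U\<close> by (auto simp: B_def)
    moreover have "k \<in> B" using x(2) \<open>k \<in> M\<close> by (simp add: B_def)
    moreover have "B \<in> \<B>" using x(1) by (auto simp: B_def \<B>_def)
    ultimately show "\<exists>B\<in>\<B>. k \<in> B \<and> B \<subseteq> U" by blast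
  qed
qed

lemma local_base_on_prod_topology:
  assumes "second_countable X" and "countable \<B>" "local_base_on Y P \<B>"
  obtains \<C> where "countable \<C>" "local_base_on (prod_topology X Y) (UNIV \<times> P) \<C>"
proof -
  obtain \<A> where \<A>: "countable \<A>" "\<And>U. U \<in> \<A> \<Longrightarrow> openin X U"
    "\<And>W x. openin X W \<Longrightarrow> x \<in> W \<Longrightarrow> \<exists>U\<in>\<A>. x \<in> U \<and> U \<subseteq> W"
    using assms(1) unfolding second_countable_def by metis
  have \<B>: "\<And>V. V \<in> \<B> \<Longrightarrow> openin Y V"
    "\<And>W y. y \<in> P \<Longrightarrow> openin Y W \<Longrightarrow> y \<in> W \<Longrightarrow> \<exists>V\<in>\<B>. y \<in> V \<and> V \<subseteq> W"
    using assms(3) unfolding local_base_on_def by simp_all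
  define \<C> where "\<C> = (\<lambda>(U, V). U \<times> V) ` (\<A> \<times> \<B>)"
  have "countable \<C>" unfolding \<C>_def using \<A>(1) assms(2) by (intro countable_image countable_SIGMA)
  moreover have "local_base_on (prod_topology X Y) (UNIV \<times> P) \<C>"
    unfolding local_base_on_def
  proof (intro conjI ballI allI impI)
    fix C assume "C \<in> \<C>"
    then obtain U V where "C = U \<times> V" "U \<in> \<A>" "V \<in> \<B>" by (auto simp: \<C>_def)
    then show "openin (prod_topology X Y) C" by (simp add: openin_prod_Times_iff \<A>(2) \<B>(1))
  next
    fix p W assume p: "p \<in> UNIV \<times> P" and W: "openin (prod_topology X Y) W \<and> p \<in> W"
    obtain x y where xy: "p = (x, y)" by (cases p)
    then have xyW: "(x, y) \<in> W" using W by simp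
    obtain U V where UV: "openin X U" "openin Y V" "x \<in> U" "y \<in> V" "U \<times> V \<subseteq> W"
      using W[THEN conjunct1, unfolded openin_prod_topology_alt, rule_format, OF xyW] by blast
    obtain U' where U': "U' \<in> \<A>" "x \<in> U'" "U' \<subseteq> U"
      using \<A>(3)[OF UV(1,3)] by blast
    have "y \<in> P" using p xy by simp
    then obtain V' where V': "V' \<in> \<B>" "y \<in> V'" "V' \<subseteq> V"
      using \<B>(2)[OF _ UV(2,4)] by blast
    have "U' \<times> V' \<in> \<C>" unfolding \<C>_def using U'(1) V'(1) by blast
    moreover have "p \<in> U' \<times> V'" using U'(2) V'(2) xy by simp
    moreover have "U' \<times> V' \<subseteq> W" using U'(3) V'(3) UV(5) by force
    ultimately show "\<exists>C\<in>\<C>. p \<in> C \<and> C \<subseteq> W" by (intro bexI[of _ "U' \<times> V'"] conjI)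
  qed
  ultimately show thesis using that by blast
qed

lemma K_top_countable_local_base:
  assumes "S \<subseteq> \<A>" "countable S"
  obtains \<B> where "countable \<B>" "local_base_on (K_top \<A>) (range Inl \<union> Inr ` S) \<B>"
proof
  define \<B> where "\<B> = range (\<lambda>n. {Inl n :: nat + nat set}) \<union>
      (\<lambda>(A, G). insert (Inr A) (Inl ` (A - G))) ` (S \<times> Collect finite)"
  show "countable \<B>"
    unfolding \<B>_def using assms(2)
    by (intro countable_Un countable_image countable_SIGMA countable_Collect_finite) auto
  show "local_base_on (K_top \<A>) (range Inl \<union> Inr ` S) \<B>"
    unfolding local_base_on_def
  proof (intro conjI ballI allI impI)
    show "openin (K_top \<A>) B" if "B \<in> \<B>" for B
      using that assms(1) by (auto simp: \<B>_def intro: openin_K_top_column openin_K_top_Inl)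
    fix w W assume w: "w \<in> range Inl \<union> Inr ` S" and W: "openin (K_top \<A>) W \<and> w \<in> W"
    show "\<exists>B\<in>\<B>. w \<in> B \<and> B \<subseteq> W"
    proof (cases w)
      case (Inl n)
      then show ?thesis using W by (auto simp: \<B>_def)
    next
      case (Inr A)
      with w have "A \<in> S" by auto
      moreover obtain G where "finite G" "Inl ` (A - G) \<subseteq> W"
        using W Inr \<open>A \<in> S\<close> assms(1) unfolding openin_K_top by blast
      ultimately show ?thesis using Inr W by (auto simp: \<B>_def)
    qed
  qed
qed

section \<open>Separability of subspaces of \<open>C\<^sub>0(M \<times> K_A)\<close>\<close>

lemma C0_bounded:
  assumes "f \<in> C0 X"
  obtains B where "\<And>p. norm (f p) \<le> B"
proof -
  have "compactin euclidean (f ` {p \<in> topspace X. 1 \<le> norm (f p)})"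
    using assms by (intro image_compactin[of X]) (auto simp: C0_def)
  then obtain B where B: "\<And>y. y \<in> f ` {p \<in> topspace X. 1 \<le> norm (f p)} \<Longrightarrow> norm y \<le> B"
    by (metis bounded_iff compact_imp_bounded compactin_euclidean_iff)
  have "norm (f p) \<le> max 1 B" for p
  proof (cases "p \<in> topspace X \<and> 1 \<le> norm (f p)")
    case True
    then show ?thesis using B by fastforce
  next
    case False
    then show ?thesis using assms by (cases "p \<in> topspace X") (auto simp: C0_def)
  qed
  then show thesis using that by blast
qed

lemma norm_le_sup_dist:
  assumes "f \<in> C0 X" "g \<in> C0 X" "p \<in> topspace X"
  shows "norm (f p - g p) \<le> sup_dist X f g"
proof -
  obtain B1 where B1: "\<And>p. norm (f p) \<le> B1" using C0_bounded[OF assms(1)] by blast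
  obtain B2 where B2: "\<And>p. norm (g p) \<le> B2" using C0_bounded[OF assms(2)] by blast
  have "norm (f q - g q) \<le> B1 + B2" for q
    using norm_triangle_ineq4[of "f q" "g q"] B1[of q] B2[of q] by linarith
  then have "bdd_above (insert 0 ((\<lambda>p. norm (f p - g p)) ` topspace X))"
    by (intro bdd_aboveI[of _ "B1 + B2"]) (auto intro: order_trans[OF norm_ge_zero])
  then show ?thesis
    unfolding sup_dist_def by (rule cSup_upper[rotated]) (use assms(3) in blast)
qed

lemma sup_dist_le:
  assumes "\<And>p. p \<in> topspace X \<Longrightarrow> norm (f p - g p) \<le> c" "0 \<le> c"
  shows "sup_dist X f g \<le> c"
  unfolding sup_dist_def by (rule cSup_least) (use assms in auto)

definition Inr_support ::
    "'x topology \<Rightarrow> nat set set \<Rightarrow> ('x \<times> (nat + nat set) \<Rightarrow> 'a::zero) set \<Rightarrow> nat set set" where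
  "Inr_support Y \<A> \<X> = {A \<in> \<A>. \<exists>f\<in>\<X>. \<exists>k\<in>topspace Y. f (k, Inr A) \<noteq> 0}"

lemma countable_Inr_support_C0:
  assumes "d \<in> C0 (prod_topology Y (K_top \<A>))"
  shows "countable (Inr_support Y \<A> {d})"
proof -
  let ?T = "prod_topology Y (K_top \<A>)"
  define C where "C n = {p \<in> topspace ?T. 1 / real (Suc n) \<le> norm (d p)}" for n
  have "compactin (K_top \<A>) (snd ` C n)" for n
    using assms by (intro image_compactin[of ?T] continuous_map_snd) (auto simp: C_def C0_def)
  then have "countable {A \<in> \<A>. Inr A \<in> snd ` C n}" for n
    by (intro countable_finite compactin_K_top_finite_Inr)
  then have "countable (\<Union>n. {A \<in> \<A>. Inr A \<in> snd ` C n})" by (intro countable_UN) auto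
  moreover have "Inr_support Y \<A> {d} \<subseteq> (\<Union>n. {A \<in> \<A>. Inr A \<in> snd ` C n})"
  proof
    fix A assume "A \<in> Inr_support Y \<A> {d}"
    then obtain k where A: "A \<in> \<A>" "k \<in> topspace Y" "d (k, Inr A) \<noteq> 0"
      by (auto simp: Inr_support_def)
    obtain n where "1 / real (Suc n) < norm (d (k, Inr A))"
      using reals_Archimedean A(3) by (metis inverse_eq_divide zero_less_norm_iff)
    then have "(k, Inr A) \<in> C n"
      using A by (simp add: C_def topspace_K_top K_carrier_def)
    then have "Inr A \<in> snd ` C n" by (metis image_eqI snd_conv)
    then show "A \<in> (\<Union>n. {A \<in> \<A>. Inr A \<in> snd ` C n})" using A(1) by blast
  qed
  ultimately show ?thesis by (rule countable_subset[rotated])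
qed

lemma countable_Inr_support_if_separable:
  assumes "\<X> \<subseteq> C0 (prod_topology Y (K_top \<A>))" "separable_sup (prod_topology Y (K_top \<A>)) \<X>"
  shows "countable (Inr_support Y \<A> \<X>)"
proof -
  let ?T = "prod_topology Y (K_top \<A>)"
  obtain D where D: "countable D" "D \<subseteq> \<X>" "\<And>f e. f \<in> \<X> \<Longrightarrow> 0 < e \<Longrightarrow> \<exists>d\<in>D. sup_dist ?T f d < e"
    using assms(2) unfolding separable_sup_def by metis
  have "Inr_support Y \<A> \<X> \<subseteq> (\<Union>d\<in>D. Inr_support Y \<A> {d})"
  proof
    fix A assume "A \<in> Inr_support Y \<A> \<X>"
    then obtain f k where A: "A \<in> \<A>" "f \<in> \<X>" "k \<in> topspace Y" "f (k, Inr A) \<noteq> 0"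
      by (auto simp: Inr_support_def)
    obtain d where d: "d \<in> D" "sup_dist ?T f d < norm (f (k, Inr A))"
      using D(3) A(2,4) by (meson zero_less_norm_iff)
    have "(k, Inr A) \<in> topspace ?T" using A(1,3) by (simp add: topspace_K_top K_carrier_def)
    then have "norm (f (k, Inr A) - d (k, Inr A)) \<le> sup_dist ?T f d"
      using assms(1) A(2) D(2) d(1) by (intro norm_le_sup_dist) auto
    then have "d (k, Inr A) \<noteq> 0" using d(2) by auto
    then show "A \<in> (\<Union>d\<in>D. Inr_support Y \<A> {d})"
      using A(1,3) d(1) by (auto simp: Inr_support_def)
  qed
  moreover have "countable (\<Union>d\<in>D. Inr_support Y \<A> {d})"
    using D(1,2) assms(1) by (intro countable_UN countable_Inr_support_C0) auto
  ultimately show ?thesis by (rule countable_subset)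
qed

fun step_fun :: "('x set \<times> 'a::zero) list \<Rightarrow> 'x \<Rightarrow> 'a" where
  "step_fun [] p = 0"
| "step_fun ((B, c) # L) p = (if p \<in> B then c else step_fun L p)"

lemma step_fun_in_block: "p \<in> \<Union>(fst ` set L) \<Longrightarrow> \<exists>(B, c)\<in>set L. p \<in> B \<and> step_fun L p = c"
  by (induction L p rule: step_fun.induct) auto

lemma step_fun_outside: "p \<notin> \<Union>(fst ` set L) \<Longrightarrow> step_fun L p = 0"
  by (induction L p rule: step_fun.induct) auto

lemma compactin_cover_small_oscillation:
  assumes "compactin X C" "continuous_map X euclidean f" "local_base_on X C \<B>" "0 < \<delta>"
  obtains \<F> where "finite \<F>" "\<F> \<subseteq> \<B>" "C \<subseteq> \<Union>\<F>"
    "\<And>B. B \<in> \<F> \<Longrightarrow> \<exists>p\<in>B. \<forall>q\<in>B. dist (f q) (f p) < \<delta>"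
proof -
  define \<U> where "\<U> = {B \<in> \<B>. \<exists>p\<in>B. \<forall>q\<in>B. dist (f q) (f p) < \<delta>}"
  have \<B>: "\<And>B. B \<in> \<B> \<Longrightarrow> openin X B"
    "\<And>p W. p \<in> C \<Longrightarrow> openin X W \<Longrightarrow> p \<in> W \<Longrightarrow> \<exists>B\<in>\<B>. p \<in> B \<and> B \<subseteq> W"
    using assms(3) unfolding local_base_on_def by simp_all
  have "C \<subseteq> \<Union>\<U>"
  proof
    fix p assume p: "p \<in> C"
    define W where "W = {q \<in> topspace X. f q \<in> ball (f p) \<delta>}"
    have "openin X W" unfolding W_def by (rule openin_continuous_map_preimage[OF assms(2)]) simp
    moreover have "p \<in> W"
      using p assms(4) compactin_subset_topspace[OF assms(1)] by (auto simp: W_def)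
    ultimately obtain B where B: "B \<in> \<B>" "p \<in> B" "B \<subseteq> W" using \<B>(2) p by blast
    have "dist (f q) (f p) < \<delta>" if "q \<in> B" for q
      using that B(3) by (auto simp: W_def dist_commute)
    then have "B \<in> \<U>" using B(1,2) unfolding \<U>_def by blast
    then show "p \<in> \<Union>\<U>" using B(2) by blast
  qed
  moreover have "\<forall>U\<in>\<U>. openin X U" using \<B>(1) by (simp add: \<U>_def)
  ultimately obtain \<F> where \<F>: "finite \<F>" "\<F> \<subseteq> \<U>" "C \<subseteq> \<Union>\<F>"
    using assms(1) unfolding compactin_def by meson
  show thesis
  proof (rule that[OF \<F>(1) _ \<F>(3)])
    show "\<F> \<subseteq> \<B>" using \<F>(2) unfolding \<U>_def by blast
    show "\<exists>p\<in>B. \<forall>q\<in>B. dist (f q) (f p) < \<delta>" if "B \<in> \<F>" for B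
      using \<F>(2) that unfolding \<U>_def by blast
  qed
qed

lemma step_fun_approx:
  fixes f :: "'x \<Rightarrow> 'a::real_normed_vector"
  assumes "finite \<F>" and osc: "\<And>B. B \<in> \<F> \<Longrightarrow> \<exists>p\<in>B. \<forall>q\<in>B. dist (f q) (f p) < \<delta>"
    and dense: "\<And>y. \<exists>c\<in>Q. dist y c < \<delta>"
  obtains L where "L \<in> lists (\<F> \<times> Q)"
    "\<And>p. p \<in> \<Union>\<F> \<Longrightarrow> dist (f p) (step_fun L p) < 2 * \<delta>"
    "\<And>p. p \<notin> \<Union>\<F> \<Longrightarrow> step_fun L p = 0"
proof -
  obtain centre where centre: "\<And>B. B \<in> \<F> \<Longrightarrow> centre B \<in> B \<and> (\<forall>q\<in>B. dist (f q) (f (centre B)) < \<delta>)"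
    using osc by metis
  from dense have "\<forall>y. \<exists>c. c \<in> Q \<and> dist y c < \<delta>" by blast
  then obtain approx where approx: "\<And>y. approx y \<in> Q \<and> dist y (approx y) < \<delta>" by metis
  define val where "val B = approx (f (centre B))" for B
  have val: "val B \<in> Q \<and> dist (f (centre B)) (val B) < \<delta>" for B
    using approx by (simp add: val_def)
  obtain Bs where Bs: "set Bs = \<F>" using finite_list[OF assms(1)] by blast
  define L where "L = map (\<lambda>B. (B, val B)) Bs"
  have blocks: "\<Union>(fst ` set L) = \<Union>\<F>" by (simp add: L_def Bs image_image)
  show thesis
  proof (rule that)
    show "L \<in> lists (\<F> \<times> Q)" using Bs val by (auto simp: L_def)
  next
    fix p assume "p \<in> \<Union>\<F>"
    then obtain B c where Bc: "(B, c) \<in> set L" "p \<in> B" "step_fun L p = c"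
      using step_fun_in_block[of p L] blocks by auto
    then have B: "B \<in> \<F>" "c = val B" using Bs by (auto simp: L_def)
    have "dist (f p) c \<le> dist (f p) (f (centre B)) + dist (f (centre B)) (val B)"
      using B(2) by (rule ssubst) (rule dist_triangle)
    also have "\<dots> < \<delta> + \<delta>" using centre[OF B(1)] val[of B] Bc(2) by (intro add_strict_mono) auto
    finally show "dist (f p) (step_fun L p) < 2 * \<delta>" using Bc(3) by simp
  next
    fix p assume "p \<notin> \<Union>\<F>"
    then have "p \<notin> \<Union>(fst ` set L)" using blocks by simp
    then show "step_fun L p = 0" by (rule step_fun_outside)
  qed
qed

lemma C0_approx_by_step_fun:
  assumes "f \<in> C0 X" "0 < e" "local_base_on X {p \<in> topspace X. f p \<noteq> 0} \<B>"
    and dense: "\<And>y \<delta>. 0 < \<delta> \<Longrightarrow> \<exists>c\<in>Q. dist y c < \<delta>"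
  obtains L where "L \<in> lists (\<B> \<times> Q)" "\<And>p. p \<in> topspace X \<Longrightarrow> dist (f p) (step_fun L p) < e"
proof -
  define C where "C = {p \<in> topspace X. e \<le> norm (f p)}"
  have "compactin X C" "continuous_map X euclidean f"
    using assms(1,2) by (auto simp: C_def C0_def)
  moreover have "local_base_on X C \<B>"
    using assms(3) by (rule local_base_on_subset) (use assms(2) in \<open>auto simp: C_def\<close>)
  ultimately obtain \<F> where \<F>: "finite \<F>" "\<F> \<subseteq> \<B>" "C \<subseteq> \<Union>\<F>"
    "\<And>B. B \<in> \<F> \<Longrightarrow> \<exists>p\<in>B. \<forall>q\<in>B. dist (f q) (f p) < e / 2"
    using compactin_cover_small_oscillation[of X C f \<B> "e / 2"] assms(2) by auto
  obtain L where L: "L \<in> lists (\<F> \<times> Q)"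
    "\<And>p. p \<in> \<Union>\<F> \<Longrightarrow> dist (f p) (step_fun L p) < 2 * (e / 2)"
    "\<And>p. p \<notin> \<Union>\<F> \<Longrightarrow> step_fun L p = 0"
    using step_fun_approx[OF \<F>(1,4)] dense assms(2) by (metis half_gt_zero)
  show thesis
  proof (rule that)
    show "L \<in> lists (\<B> \<times> Q)" using L(1) \<F>(2) by auto
  next
    fix p assume p: "p \<in> topspace X"
    show "dist (f p) (step_fun L p) < e"
    proof (cases "p \<in> \<Union>\<F>")
      case True
      then show ?thesis using L(2) by simp
    next
      case False
      then have "p \<notin> C" using \<F>(3) by blast
      then show ?thesis using L(3)[OF False] p by (simp add: C_def)
    qed
  qed
qed

lemma separable_supI:
  fixes \<X> :: "('x \<Rightarrow> 'a::real_normed_field) set"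
  assumes "countable \<F>"
    and approx: "\<And>f e. f \<in> \<X> \<Longrightarrow> 0 < e \<Longrightarrow> \<exists>d\<in>\<F>. \<forall>p\<in>topspace X. dist (f p) (d p) < e"
  shows "separable_sup X \<X>"
proof -
  define near where "near d n h \<longleftrightarrow> h \<in> \<X> \<and> (\<forall>p\<in>topspace X. dist (h p) (d p) < 1 / real (Suc n))"
    for d n h
  define pick where "pick d n = (SOME h. near d n h)" for d n
  have pick: "near d n (pick d n)" if "\<exists>h. near d n h" for d n
    unfolding pick_def using that by (rule someI_ex)
  define D where "D = (\<lambda>(d, n). pick d n) ` {(d, n). d \<in> \<F> \<and> (\<exists>h. near d n h)}"
  have "countable D"
    unfolding D_def using assms(1)
    by (intro countable_image countable_subset[OF _ countable_SIGMA[of \<F> "\<lambda>_. UNIV"]]) auto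
  moreover have "D \<subseteq> \<X>"
    using pick by (auto simp: D_def near_def)
  moreover have "\<exists>h\<in>D. sup_dist X f h < e" if f: "f \<in> \<X>" and "0 < e" for f e
  proof -
    obtain n where n: "2 / real (Suc n) < e"
      using reals_Archimedean[of "e / 2"] \<open>0 < e\<close> by (auto simp: inverse_eq_divide field_simps)
    obtain d where d: "d \<in> \<F>" "\<forall>p\<in>topspace X. dist (f p) (d p) < 1 / real (Suc n)"
      using approx[OF f, of "1 / real (Suc n)"] by auto
    then have "near d n f" using f by (simp add: near_def dist_commute)
    then have pick_near: "near d n (pick d n)" using pick by blast
    have "pick d n \<in> D"
      unfolding D_def using d(1) \<open>near d n f\<close> by (intro image_eqI[where x = "(d, n)"]) auto
    moreover have "sup_dist X f (pick d n) \<le> 2 / real (Suc n)"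
    proof (rule sup_dist_le)
      fix p assume "p \<in> topspace X"
      then have "dist (f p) (pick d n p) \<le> dist (f p) (d p) + dist (pick d n p) (d p)"
        by (simp add: dist_triangle2)
      also have "\<dots> \<le> 1 / real (Suc n) + 1 / real (Suc n)"
        using d(2) pick_near \<open>p \<in> topspace X\<close> unfolding near_def by (intro add_mono less_imp_le) auto
      finally show "norm (f p - pick d n p) \<le> 2 / real (Suc n)" by (simp add: dist_norm)
    qed simp
    then have "sup_dist X f (pick d n) < e" using n by linarith
    ultimately show ?thesis by blast
  qed
  ultimately show ?thesis unfolding separable_sup_def by blast
qed

lemma nonzero_points_subset_Inr_support:
  assumes "f \<in> \<X>"
  shows "{p \<in> topspace (prod_topology Y (K_top \<A>)). f p \<noteq> 0} \<subseteq>
           UNIV \<times> (range Inl \<union> Inr ` Inr_support Y \<A> \<X>)"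
proof
  fix p assume p: "p \<in> {p \<in> topspace (prod_topology Y (K_top \<A>)). f p \<noteq> 0}"
  obtain k w where kw: "p = (k, w)" by (cases p)
  have "w \<in> range Inl \<union> Inr ` Inr_support Y \<A> \<X>"
  proof (cases w)
    case (Inr A)
    with p kw assms show ?thesis
      by (auto simp: Inr_support_def topspace_K_top K_carrier_def)
  qed simp
  then show "p \<in> UNIV \<times> (range Inl \<union> Inr ` Inr_support Y \<A> \<X>)" using kw by simp
qed

lemma separable_if_countable_Inr_support:
  fixes \<X> :: "('y \<times> (nat + nat set) \<Rightarrow> 'a::real_normed_field) set"
  assumes "second_countable Y" "\<X> \<subseteq> C0 (prod_topology Y (K_top \<A>))"
    and "countable (Inr_support Y \<A> \<X>)"
  shows "separable_sup (prod_topology Y (K_top \<A>)) \<X>"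
proof -
  let ?T = "prod_topology Y (K_top \<A>)"
  let ?P = "UNIV \<times> (range Inl \<union> Inr ` Inr_support Y \<A> \<X>)"
  obtain Q :: "'a set" where Q: "countable Q" "\<And>y e. 0 < e \<Longrightarrow> \<exists>q\<in>Q. dist y q < e"
    using real_normed_field_separable by blast
  obtain \<B>\<^sub>K where "countable \<B>\<^sub>K"
    "local_base_on (K_top \<A>) (range Inl \<union> Inr ` Inr_support Y \<A> \<X>) \<B>\<^sub>K"
    using K_top_countable_local_base[of "Inr_support Y \<A> \<X>" \<A>] assms(3)
    by (auto simp: Inr_support_def)
  then obtain \<B> where \<B>: "countable \<B>" "local_base_on ?T ?P \<B>"
    using local_base_on_prod_topology assms(1) by metis
  have "countable (step_fun ` lists (\<B> \<times> Q))"
    using \<B>(1) Q(1) by (intro countable_image countable_lists countable_SIGMA)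
  moreover have "\<exists>d\<in>step_fun ` lists (\<B> \<times> Q). \<forall>p\<in>topspace ?T. dist (f p) (d p) < e"
    if f: "f \<in> \<X>" and "0 < e" for f e
  proof -
    have "local_base_on ?T {p \<in> topspace ?T. f p \<noteq> 0} \<B>"
      using \<B>(2) nonzero_points_subset_Inr_support[OF f] by (rule local_base_on_subset)
    moreover have "f \<in> C0 ?T" using f assms(2) by blast
    ultimately obtain L where "L \<in> lists (\<B> \<times> Q)"
      "\<And>p. p \<in> topspace ?T \<Longrightarrow> dist (f p) (step_fun L p) < e"
      using C0_approx_by_step_fun[of f ?T e \<B> Q] \<open>0 < e\<close> Q(2) by blast
    then show ?thesis by (intro bexI[of _ "step_fun L"]) auto
  qed
  ultimately show ?thesis by (rule separable_supI)
qed

theorem lemma4p5: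
  fixes M :: "'m::metric_space set"
    and \<A> :: "nat set set"
    and \<X> :: "('m \<times> (nat + nat set) \<Rightarrow> 'a::real_normed_field) set"
  assumes "compact M"
    and "almost_disjoint \<A>"
    and "closed_subspace_C0 (prod_topology (top_of_set M) (K_top \<A>)) \<X>"
  shows "separable_sup (prod_topology (top_of_set M) (K_top \<A>)) \<X> \<longleftrightarrow>
         countable {A \<in> \<A>. \<exists>f\<in>\<X>. \<exists>k\<in>M. f (k, Inr A) \<noteq> 0}"
proof -
  have C0: "\<X> \<subseteq> C0 (prod_topology (top_of_set M) (K_top \<A>))"
    using assms(3) by (simp add: closed_subspace_C0_def)
  have "{A \<in> \<A>. \<exists>f\<in>\<X>. \<exists>k\<in>M. f (k, Inr A) \<noteq> 0} = Inr_support (top_of_set M) \<A> \<X>"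
    by (simp add: Inr_support_def)
  then show ?thesis
    using countable_Inr_support_if_separable[OF C0]
      separable_if_countable_Inr_support[OF second_countable_top_of_set_compact[OF assms(1)] C0]
    by auto
qed

end
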